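(* Let $0<R_1<R$ and $S=\{z\in\mathbb{C}:|z|=R,\ \mathrm{Re}(z)\ge0\}$. There exists a constant $C=C(R_1,R)>0$ with the following property: if $R_2>R$, $\Omega=\{z:R_1<|z|<R_2\}\setminus(-R_2,-R_1)$, $T=\{z:|z|=R_2\}$ and $z\in S$, then $$\omega(z,T,\Omega)\ge\frac{C}{\sqrt{R_2}}.$$
   Context: $\omega(z,E,U)$ denotes the harmonic measure of a Borel set $E\subset\partial U$ with respect to the domain $U$, evaluated at $z\in U$. *)

theory Defs
  imports "HOL-Analysis.Analysis"
begin

definition lsc_on :: "complex set \<Rightarrow> (complex \<Rightarrow> real) \<Rightarrow> bool" where
  "lsc_on U v \<longleftrightarrow> (\<forall>w\<in>U. \<forall>c. c < v w \<longrightarrow> (\<forall>\<^sub>F x in at w within U. c < v x))"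

definition superharmonic_on :: "complex set \<Rightarrow> (complex \<Rightarrow> real) \<Rightarrow> bool" where
  "superharmonic_on U v \<longleftrightarrow> lsc_on U v \<and>
     (\<forall>w\<in>U. \<exists>\<rho>>0. \<forall>r. 0 < r \<and> r < \<rho> \<longrightarrow>
        v w \<ge> (1 / (2 * pi)) * integral {0..2*pi} (\<lambda>t. v (w + complex_of_real r * cis t)))"

text \<open>Harmonic measure \<omega>(z,E,U), defined as the (upper) Perron solution of the Dirichlet
  problem with boundary data the indicator function of E: the infimum of v(z) over bounded
  superharmonic v on U with liminf_{w\<rightarrow>\<zeta>, w\<in>U} v(w) \<ge> 1_E(\<zeta>) for every \<zeta> \<in> \<partial>U.\<close>
definition harmonic_measure :: "complex \<Rightarrow> complex set \<Rightarrow> complex set \<Rightarrow> real" where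
  "harmonic_measure z E U = Inf {v z | v. bounded (v ` U) \<and> superharmonic_on U v \<and>
     (\<forall>\<zeta>\<in>frontier U. \<forall>\<epsilon>>0. \<forall>\<^sub>F w in at \<zeta> within U. indicator E \<zeta> - \<epsilon> < v w)}"

end

theory Submission
  imports Defs "HOL-Complex_Analysis.Cauchy_Integral_Formula"
begin

(* With the principal square root, h(w) = Re (sqrt w - R1 / sqrt w) / sqrt R2 is harmonic on the
   slit annulus, vanishes on |w| = R1 and on the slit (where sqrt w is purely imaginary), and is at
   most sqrt |w| / sqrt R2 <= 1 on |w| = R2.  So h minorises the boundary data of the harmonic
   measure of T, and the minimum principle applied to v - h for every Perron supersolution v gives
   omega(z,T,Omega) >= h(z).  On the right half of the circle |z| = R one has
   h(z) >= sqrt (R/2) * (1 - R1/R) / sqrt R2. *)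

lemma Re_holomorphic_circle_mean:
  assumes "G holomorphic_on cball w r" and "0 < r"
  shows "((\<lambda>t. Re (G (w + of_real r * cis t))) has_integral 2 * pi * Re (G w)) {0..2*pi}"
proof -
  have "((\<lambda>u. G u / (u - w)) has_contour_integral (2 * of_real pi * \<i> * G w)) (circlepath w r)"
    using Cauchy_integral_circlepath_simple assms by simp
  then have "((\<lambda>t. G (w + r * cis t) / (w + r * cis t - w) * r * \<i> * cis t)
               has_integral (2 * of_real pi * \<i> * G w)) {0..2*pi}"
    unfolding circlepath_def by (subst (asm) has_contour_integral_part_circlepath_iff) auto
  moreover have "(\<lambda>t. G (w + r * cis t) / (w + r * cis t - w) * r * \<i> * cis t) = (\<lambda>t. \<i> * G (w + r * cis t))"
    using assms(2) by (auto simp: field_simps)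
  ultimately have "((\<lambda>t. (-\<i>) * (\<i> * G (w + r * cis t))) has_integral (-\<i>) * (2 * of_real pi * \<i> * G w)) {0..2*pi}"
    by (intro has_integral_mult_right) simp
  then have "((\<lambda>t. G (w + r * cis t)) has_integral (2 * of_real pi * G w)) {0..2*pi}"
    by (simp add: algebra_simps)
  from has_integral_linear[OF this bounded_linear_Re] show ?thesis
    by (simp add: o_def)
qed

lemma openin_superlevel_lsc:
  fixes g :: "'a::metric_space \<Rightarrow> real"
  assumes "\<And>t c. t \<in> S \<Longrightarrow> c < g t \<Longrightarrow> \<forall>\<^sub>F s in at t within S. c < g s"
  shows "openin (top_of_set S) {s \<in> S. c < g s}"
  unfolding openin_euclidean_subtopology_iff
proof safe
  fix t assume "t \<in> S" "c < g t"
  then obtain d where "d > 0" "\<forall>s\<in>S. s \<noteq> t \<and> dist s t < d \<longrightarrow> c < g s"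
    using assms unfolding eventually_at by blast
  with \<open>c < g t\<close> show "\<exists>e>0. \<forall>s\<in>S. dist s t < e \<longrightarrow> s \<in> {s \<in> S. c < g s}"
    by (metis (mono_tags, lifting) mem_Collect_eq)
qed

lemma lsc_bounded_integrable:
  fixes g :: "real \<Rightarrow> real"
  assumes lsc: "\<And>t c. t \<in> {a..b} \<Longrightarrow> c < g t \<Longrightarrow> \<forall>\<^sub>F s in at t within {a..b}. c < g s"
    and bound: "\<And>t. t \<in> {a..b} \<Longrightarrow> \<bar>g t\<bar> \<le> B"
  shows "g integrable_on {a..b}"
proof (rule measurable_bounded_by_integrable_imp_integrable_real[where g="\<lambda>_. B"])
  show "g \<in> borel_measurable (lebesgue_on {a..b})"
    unfolding borel_measurable_iff_greater
  proof
    fix c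
    obtain T where "open T" and T: "{s \<in> {a..b}. c < g s} = {a..b} \<inter> T"
      using openin_superlevel_lsc[OF lsc, of c] unfolding openin_open by blast
    then have "{a..b} \<inter> T \<in> sets (lebesgue_on {a..b})"
      unfolding sets_restrict_space by (auto intro!: imageI)
    with T show "{s \<in> space (lebesgue_on {a..b}). c < g s} \<in> sets (lebesgue_on {a..b})"
      by simp
  qed
qed (use bound in auto)

lemma lsc_nonneg_integral_le_0_imp_eq_0:
  fixes g :: "real \<Rightarrow> real"
  assumes lsc: "\<And>t c. t \<in> {a..b} \<Longrightarrow> c < g t \<Longrightarrow> \<forall>\<^sub>F s in at t within {a..b}. c < g s"
    and nonneg: "\<And>t. t \<in> {a..b} \<Longrightarrow> 0 \<le> g t"
    and "g integrable_on {a..b}" and "integral {a..b} g \<le> 0"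
    and "a < b" and t: "t \<in> {a..b}"
  shows "g t = 0"
proof (rule ccontr)
  assume "g t \<noteq> 0"
  with nonneg t have "0 < g t / 2" "g t / 2 < g t" by (auto simp: order.not_eq_order_implies_strict)
  then obtain d where "d > 0" and d: "\<forall>s\<in>{a..b}. s \<noteq> t \<and> dist s t < d \<longrightarrow> g t / 2 < g s"
    using lsc[OF t] unfolding eventually_at by blast
  define a' where "a' = max a (t - d/2)"
  define b' where "b' = min b (t + d/2)"
  have sub: "{a'..b'} \<subseteq> {a..b}" and "a' < b'"
    using t \<open>d > 0\<close> \<open>a < b\<close> by (auto simp: a'_def b'_def)
  have big: "g t / 2 \<le> g s" if "s \<in> {a'..b'}" for s
    using d that sub \<open>0 < g t / 2\<close> by (cases "s = t") (auto simp: a'_def b'_def dist_real_def)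
  have "0 < (b' - a') * (g t / 2)"
    using \<open>a' < b'\<close> \<open>0 < g t / 2\<close> by simp
  also have "\<dots> = integral {a'..b'} (\<lambda>_. g t / 2)"
    using \<open>a' < b'\<close> by simp
  also have "\<dots> \<le> integral {a'..b'} g"
    using big integrable_on_subinterval[OF assms(3) sub] by (intro integral_le) auto
  also have "\<dots> \<le> integral {a..b} g"
    using sub nonneg integrable_on_subinterval[OF assms(3) sub] assms(3)
    by (intro integral_subset_le) auto
  finally show False using assms(4) by simp
qed

lemma lsc_on_compose_continuous:
  fixes S :: "'a::metric_space set"
  assumes "lsc_on U f" and "continuous_on S \<gamma>" and "\<gamma> ` S \<subseteq> U"
    and "t \<in> S" and "c < f (\<gamma> t)"
  shows "\<forall>\<^sub>F s in at t within S. c < f (\<gamma> s)"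
proof -
  have "\<gamma> t \<in> U" using assms(3,4) by blast
  then obtain d where "d > 0" and d: "\<forall>y\<in>U. y \<noteq> \<gamma> t \<and> dist y (\<gamma> t) < d \<longrightarrow> c < f y"
    using assms(1,5) unfolding lsc_on_def eventually_at by blast
  obtain e where "e > 0" and e: "\<forall>s\<in>S. dist s t < e \<longrightarrow> dist (\<gamma> s) (\<gamma> t) < d"
    using assms(2,4) \<open>d > 0\<close> unfolding continuous_on_iff by blast
  have "c < f (\<gamma> s)" if "s \<in> S" "dist s t < e" for s
    using d e that assms(3,5) by (cases "\<gamma> s = \<gamma> t") auto
  with \<open>e > 0\<close> show ?thesis unfolding eventually_at by blast
qed

lemma lsc_on_diff_continuous:
  assumes "lsc_on U f" and "continuous_on U g"
  shows "lsc_on U (\<lambda>x. f x - g x)"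
  unfolding lsc_on_def
proof safe
  fix w c assume "w \<in> U" "c < f w - g w"
  define e where "e = (f w - g w - c) / 2"
  have "f w - e < f w" "g w < g w + e" using \<open>c < f w - g w\<close> by (auto simp: e_def)
  then have "\<forall>\<^sub>F x in at w within U. f w - e < f x" "\<forall>\<^sub>F x in at w within U. g x < g w + e"
    using assms \<open>w \<in> U\<close> by (auto simp: lsc_on_def continuous_on_def intro: order_tendstoD)
  then show "\<forall>\<^sub>F x in at w within U. c < f x - g x"
    by eventually_elim (simp add: e_def field_simps)
qed

lemma lsc_on_along_circle:
  assumes "lsc_on U f" and "\<And>t. w + of_real r * cis t \<in> U"
    and "t \<in> S" and "c < f (w + of_real r * cis t)"
  shows "\<forall>\<^sub>F s in at t within S. c < f (w + of_real r * cis s)"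
  using assms by (intro lsc_on_compose_continuous[OF assms(1), where \<gamma>="\<lambda>t. w + of_real r * cis t"])
    (auto intro!: continuous_intros)

lemma lsc_on_circle_integrable:
  assumes "lsc_on U f" and "bounded (f ` U)" and circle: "\<And>t. w + of_real r * cis t \<in> U"
  shows "(\<lambda>t. f (w + of_real r * cis t)) integrable_on {0..2*pi}"
proof -
  obtain B where "\<And>x. x \<in> U \<Longrightarrow> \<bar>f x\<bar> \<le> B"
    using assms(2) unfolding bounded_iff by auto
  with circle show ?thesis
    by (intro lsc_bounded_integrable lsc_on_along_circle[OF assms(1) circle]) blast+
qed

lemma superharmonic_on_diff_Re_holomorphic:
  assumes "open U" and v: "superharmonic_on U v" "bounded (v ` U)" and G: "G holomorphic_on U"
  shows "superharmonic_on U (\<lambda>w. v w - Re (G w))"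
  unfolding superharmonic_on_def
proof safe
  show "lsc_on U (\<lambda>w. v w - Re (G w))"
    using v G by (intro lsc_on_diff_continuous continuous_intros holomorphic_on_imp_continuous_on)
      (auto simp: superharmonic_on_def)
next
  fix w assume "w \<in> U"
  obtain \<rho> where "\<rho> > 0" and \<rho>: "\<And>r. 0 < r \<Longrightarrow> r < \<rho> \<Longrightarrow>
      (1 / (2*pi)) * integral {0..2*pi} (\<lambda>t. v (w + of_real r * cis t)) \<le> v w"
    using v \<open>w \<in> U\<close> unfolding superharmonic_on_def by blast
  obtain \<rho>' where "\<rho>' > 0" "ball w \<rho>' \<subseteq> U" using \<open>open U\<close> \<open>w \<in> U\<close> open_contains_ball by blast
  have "(1 / (2*pi)) * integral {0..2*pi} (\<lambda>t. v (w + of_real r * cis t) - Re (G (w + of_real r * cis t)))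
          \<le> v w - Re (G w)" if r: "0 < r" "r < min \<rho> \<rho>'" for r
  proof -
    have cball: "cball w r \<subseteq> U" using \<open>ball w \<rho>' \<subseteq> U\<close> r by (auto simp: subset_eq)
    have circle: "w + of_real r * cis t \<in> U" for t
      using cball r by (auto simp: dist_norm norm_mult)
    have "integral {0..2*pi} (\<lambda>t. v (w + of_real r * cis t) - Re (G (w + of_real r * cis t)))
        = integral {0..2*pi} (\<lambda>t. v (w + of_real r * cis t)) - 2 * pi * Re (G w)"
      using lsc_on_circle_integrable[of U v, OF _ v(2) circle] v
        Re_holomorphic_circle_mean[OF holomorphic_on_subset[OF G cball] r(1)]
      by (subst integral_diff) (auto simp: superharmonic_on_def integral_unique)
    then show ?thesis using \<rho>[of r] r by (simp add: field_simps)
  qed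
  with \<open>\<rho> > 0\<close> \<open>\<rho>' > 0\<close> show "\<exists>\<rho>>0. \<forall>r. 0 < r \<and> r < \<rho> \<longrightarrow>
      (1 / (2*pi)) * integral {0..2*pi} (\<lambda>t. v (w + of_real r * cis t) - Re (G (w + of_real r * cis t)))
        \<le> v w - Re (G w)"
    by (intro exI[of _ "min \<rho> \<rho>'"]) auto
qed

lemma lsc_on_circle_mean_le_min_imp_eq:
  assumes "lsc_on U f" and "bounded (f ` U)" and min: "\<And>x. x \<in> U \<Longrightarrow> m \<le> f x"
    and circle: "\<And>t. w + of_real r * cis t \<in> U"
    and mean: "(1 / (2*pi)) * integral {0..2*pi} (\<lambda>t. f (w + of_real r * cis t)) \<le> m"
    and t: "t \<in> {0..2*pi}"
  shows "f (w + of_real r * cis t) = m"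
proof -
  define g where "g = (\<lambda>s. f (w + of_real r * cis s) - m)"
  have int: "g integrable_on {0..2*pi}"
    unfolding g_def using lsc_on_circle_integrable[OF assms(1,2) circle] by (intro integrable_diff) auto
  have "g t = 0"
  proof (rule lsc_nonneg_integral_le_0_imp_eq_0[OF _ _ int _ _ t])
    show "\<forall>\<^sub>F s in at t within {0..2*pi}. c < g s" if "t \<in> {0..2*pi}" "c < g t" for t c
      using that unfolding g_def less_diff_eq by (rule lsc_on_along_circle[OF assms(1) circle])
    show "0 \<le> g s" for s using min circle by (simp add: g_def)
    have "integral {0..2*pi} g = integral {0..2*pi} (\<lambda>t. f (w + of_real r * cis t)) - 2 * pi * m"
      unfolding g_def using lsc_on_circle_integrable[OF assms(1,2) circle] by (subst integral_diff) auto
    then show "integral {0..2*pi} g \<le> 0"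
      using mean by (simp add: field_simps)
  qed auto
  then show ?thesis by (simp add: g_def)
qed

lemma eq_add_cis_Arg2pi: "u = w + of_real (cmod (u - w)) * cis (Arg2pi (u - w))"
  using Arg2pi[of "u - w"] by (simp add: is_Arg_def cis_conv_exp algebra_simps)

lemma superharmonic_on_min_set_open:
  assumes "open U" and "superharmonic_on U f" and "bounded (f ` U)"
    and min: "\<And>x. x \<in> U \<Longrightarrow> m \<le> f x"
  shows "open {x \<in> U. f x = m}"
  unfolding open_contains_ball
proof (intro ballI)
  fix w assume "w \<in> {x \<in> U. f x = m}"
  then have "w \<in> U" "f w = m" by auto
  obtain \<rho> where "\<rho> > 0" and \<rho>: "\<And>r. 0 < r \<Longrightarrow> r < \<rho> \<Longrightarrow>
      (1 / (2*pi)) * integral {0..2*pi} (\<lambda>t. f (w + of_real r * cis t)) \<le> f w"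
    using assms(2) \<open>w \<in> U\<close> unfolding superharmonic_on_def by blast
  obtain \<rho>' where "\<rho>' > 0" "ball w \<rho>' \<subseteq> U" using \<open>open U\<close> \<open>w \<in> U\<close> open_contains_ball by blast
  have "f u = m" if "u \<in> ball w (min \<rho> \<rho>')" for u
  proof (cases "u = w")
    case False
    define r where "r = cmod (u - w)"
    have "0 < r" "r < \<rho>" "r < \<rho>'" using that False by (auto simp: r_def dist_norm norm_minus_commute)
    have circle: "w + of_real r * cis t \<in> U" for t
      using \<open>ball w \<rho>' \<subseteq> U\<close> \<open>r < \<rho>'\<close> \<open>0 < r\<close> by (auto simp: dist_norm norm_mult)
    have "f (w + of_real r * cis (Arg2pi (u - w))) = m"
      using \<rho>[OF \<open>0 < r\<close> \<open>r < \<rho>\<close>] \<open>f w = m\<close> Arg2pi[of "u - w"] assms(2,3) min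
      by (intro lsc_on_circle_mean_le_min_imp_eq[OF _ _ _ circle]) (auto simp: superharmonic_on_def)
    then show ?thesis using eq_add_cis_Arg2pi[of u w] by (simp add: r_def)
  qed (use \<open>f w = m\<close> in simp)
  then show "\<exists>e>0. ball w e \<subseteq> {x \<in> U. f x = m}"
    using \<open>\<rho> > 0\<close> \<open>\<rho>' > 0\<close> \<open>ball w \<rho>' \<subseteq> U\<close> by (intro exI[of _ "min \<rho> \<rho>'"]) auto
qed

lemma lsc_on_closed_negative_sublevel:
  assumes "open U" and "lsc_on U f"
    and boundary: "\<And>\<zeta> \<epsilon>. \<zeta> \<in> frontier U \<Longrightarrow> \<epsilon> > 0 \<Longrightarrow> \<forall>\<^sub>F x in at \<zeta> within U. - \<epsilon> < f x"
    and "c < 0"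
  shows "closed {x \<in> U. f x \<le> c}"
proof -
  have "openin (top_of_set U) {x \<in> U. c < f x}"
    by (rule openin_superlevel_lsc) (use assms(2) in \<open>auto simp: lsc_on_def\<close>)
  moreover have "U - {x \<in> U. f x \<le> c} = {x \<in> U. c < f x}" by auto
  ultimately have "closedin (top_of_set U) {x \<in> U. f x \<le> c}"
    by (simp add: closedin_def)
  then obtain T where "closed T" and T: "{x \<in> U. f x \<le> c} = U \<inter> T"
    unfolding closedin_closed by blast
  have "closure {x \<in> U. f x \<le> c} \<subseteq> U"
  proof
    fix \<zeta> assume \<zeta>: "\<zeta> \<in> closure {x \<in> U. f x \<le> c}"
    show "\<zeta> \<in> U"
    proof (rule ccontr)
      assume "\<zeta> \<notin> U"
      with \<zeta> have "\<zeta> \<in> frontier U"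
        using closure_mono[of "{x \<in> U. f x \<le> c}" U] \<open>open U\<close> by (auto simp: frontier_def interior_open)
      then obtain d where "d > 0" and d: "\<forall>x\<in>U. x \<noteq> \<zeta> \<and> dist x \<zeta> < d \<longrightarrow> c < f x"
        using boundary[of \<zeta> "- c"] \<open>c < 0\<close> unfolding eventually_at by auto
      obtain x where "x \<in> U" "f x \<le> c" "dist x \<zeta> < d"
        using \<zeta> \<open>d > 0\<close> unfolding closure_approachable by blast
      with d \<open>\<zeta> \<notin> U\<close> show False by fastforce
    qed
  qed
  with T \<open>closed T\<close> have "closure {x \<in> U. f x \<le> c} \<subseteq> {x \<in> U. f x \<le> c}"
    using closure_minimal[of "{x \<in> U. f x \<le> c}" T] by blast
  then show ?thesis using closure_subset_eq by blast
qed

lemma lsc_on_attains_negative_Inf: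
  assumes "open U" and "bounded U" and "lsc_on U f" and "bdd_below (f ` U)"
    and boundary: "\<And>\<zeta> \<epsilon>. \<zeta> \<in> frontier U \<Longrightarrow> \<epsilon> > 0 \<Longrightarrow> \<forall>\<^sub>F x in at \<zeta> within U. - \<epsilon> < f x"
    and "w \<in> U" and "f w < 0"
  obtains l where "l \<in> U" and "f l = Inf (f ` U)"
proof -
  define m where "m = Inf (f ` U)"
  have lower: "m \<le> f x" if "x \<in> U" for x
    unfolding m_def using assms(4) that by (intro cInf_lower) auto
  define \<delta> where "\<delta> = - m / 2"
  have "m < 0" "0 < \<delta>" using lower[OF \<open>w \<in> U\<close>] \<open>f w < 0\<close> by (auto simp: \<delta>_def)
  define S where "S n = {x \<in> U. f x \<le> m + \<delta> / (n + 1)}" for n :: nat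
  have "m + \<delta> / (n + 1) < 0" for n :: nat
  proof -
    have "\<delta> / (n + 1) \<le> \<delta>" using \<open>0 < \<delta>\<close> by (simp add: divide_le_eq)
    then show ?thesis using \<open>m < 0\<close> \<delta>_def by linarith
  qed
  then have "closed (S n)" for n
    unfolding S_def using assms(1,3) boundary by (intro lsc_on_closed_negative_sublevel)
  moreover have "S n \<noteq> {}" for n
  proof -
    have "Inf (f ` U) < m + \<delta> / (n + 1)" using \<open>0 < \<delta>\<close> by (simp add: m_def)
    then obtain x where "x \<in> U" "f x < m + \<delta> / (n + 1)"
      using \<open>w \<in> U\<close> assms(4) by (subst (asm) cInf_less_iff) auto
    then show ?thesis unfolding S_def by force
  qed
  moreover have "S n \<subseteq> S k" if "k \<le> n" for k n
  proof -
    have "\<delta> / (n + 1) \<le> \<delta> / (k + 1)" using that \<open>0 < \<delta>\<close> by (intro divide_left_mono) auto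
    then show ?thesis unfolding S_def by auto
  qed
  moreover have "bounded (S 0)" unfolding S_def using \<open>bounded U\<close> by (rule bounded_subset) auto
  ultimately obtain l where l: "\<And>n. l \<in> S n" using bounded_closed_nest[of S] by blast
  have "f l \<le> m"
  proof (rule ccontr)
    assume "\<not> f l \<le> m"
    then obtain n where "inverse (real (Suc n)) < (f l - m) / \<delta>"
      using \<open>0 < \<delta>\<close> reals_Archimedean by (metis diff_gt_0_iff_gt divide_pos_pos not_le)
    then have "m + \<delta> / (n + 1) < f l" using \<open>0 < \<delta>\<close> by (simp add: field_simps)
    with l[of n] show False by (simp add: S_def)
  qed
  with l[of 0] lower show ?thesis unfolding S_def m_def by (intro that) (auto intro: antisym)
qed

(* U need not be connected: the set where f attains a negative infimum is clopen in the whole plane. *)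
lemma superharmonic_minimum_principle:
  assumes "open U" and "bounded U" and "superharmonic_on U f" and "bounded (f ` U)"
    and boundary: "\<And>\<zeta> \<epsilon>. \<zeta> \<in> frontier U \<Longrightarrow> \<epsilon> > 0 \<Longrightarrow> \<forall>\<^sub>F x in at \<zeta> within U. - \<epsilon> < f x"
    and "w \<in> U"
  shows "0 \<le> f w"
proof (rule ccontr)
  assume "\<not> 0 \<le> f w"
  have lsc: "lsc_on U f" using assms(3) by (simp add: superharmonic_on_def)
  have bdd: "bdd_below (f ` U)" using assms(4) by (rule bounded_imp_bdd_below)
  define m where "m = Inf (f ` U)"
  have lower: "m \<le> f x" if "x \<in> U" for x
    unfolding m_def using bdd that by (intro cInf_lower) auto
  have "m < 0" using lower[OF \<open>w \<in> U\<close>] \<open>\<not> 0 \<le> f w\<close> by simp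
  obtain l where "l \<in> U" "f l = m"
    using lsc_on_attains_negative_Inf[OF assms(1,2) lsc bdd boundary \<open>w \<in> U\<close>] \<open>\<not> 0 \<le> f w\<close>
    unfolding m_def by force
  define M where "M = {x \<in> U. f x = m}"
  have "open M"
    unfolding M_def using assms(1,3,4) lower by (rule superharmonic_on_min_set_open)
  moreover have "M = {x \<in> U. f x \<le> m}" using lower by (force simp: M_def)
  then have "closed M"
    using lsc_on_closed_negative_sublevel[OF assms(1) lsc boundary \<open>m < 0\<close>] by simp
  moreover have "M \<noteq> {}" using \<open>l \<in> U\<close> \<open>f l = m\<close> by (auto simp: M_def)
  moreover have "M \<noteq> UNIV"
    using bounded_subset[OF \<open>bounded U\<close>, of M] not_bounded_UNIV by (auto simp: M_def)
  ultimately show False using clopen[of M] by blast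
qed

lemma harmonic_measure_ge_harmonic_minorant:
  assumes "open U" and "bounded U" and "G holomorphic_on U"
    and h: "\<And>w. w \<in> U \<Longrightarrow> h w = Re (G w)" and "continuous_on (closure U) h"
    and boundary: "\<And>\<zeta>. \<zeta> \<in> frontier U \<Longrightarrow> h \<zeta> \<le> indicator E \<zeta>"
    and "z \<in> U"
  shows "h z \<le> harmonic_measure z E U"
  unfolding harmonic_measure_def
proof (rule cInf_greatest)
  have "superharmonic_on U (\<lambda>_. 1)"
    by (auto simp: superharmonic_on_def lsc_on_def intro: exI[of _ 1])
  moreover have "\<forall>\<zeta>\<in>frontier U. \<forall>\<epsilon>>0. \<forall>\<^sub>F w in at \<zeta> within U. indicator E \<zeta> - \<epsilon> < (1::real)"
    by (auto simp: indicator_def)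
  ultimately show "{v z |v. bounded (v ` U) \<and> superharmonic_on U v \<and>
      (\<forall>\<zeta>\<in>frontier U. \<forall>\<epsilon>>0. \<forall>\<^sub>F w in at \<zeta> within U. indicator E \<zeta> - \<epsilon> < v w)} \<noteq> {}"
    by (auto intro!: exI[of _ "\<lambda>_. 1"] simp: image_constant_conv)
next
  fix x assume "x \<in> {v z |v. bounded (v ` U) \<and> superharmonic_on U v \<and>
      (\<forall>\<zeta>\<in>frontier U. \<forall>\<epsilon>>0. \<forall>\<^sub>F w in at \<zeta> within U. indicator E \<zeta> - \<epsilon> < v w)}"
  then obtain v where "x = v z" and "bounded (v ` U)" and "superharmonic_on U v"
    and v_boundary: "\<And>\<zeta> \<epsilon>. \<zeta> \<in> frontier U \<Longrightarrow> \<epsilon> > 0 \<Longrightarrow>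
        \<forall>\<^sub>F w in at \<zeta> within U. indicator E \<zeta> - \<epsilon> < v w"
    by blast
  define f where "f w = v w - Re (G w)" for w
  have "bounded (h ` closure U)"
    using \<open>bounded U\<close> \<open>continuous_on (closure U) h\<close> by (intro compact_imp_bounded compact_continuous_image) auto
  then have "bounded (h ` U)" by (rule bounded_subset) (use closure_subset in blast)
  then have "bounded (f ` U)"
    using \<open>bounded (v ` U)\<close> h bounded_minus_comp[of v U h] by (auto simp: f_def cong: image_cong)
  moreover have "superharmonic_on U f"
    unfolding f_def using assms(1,3) \<open>superharmonic_on U v\<close> \<open>bounded (v ` U)\<close>
    by (intro superharmonic_on_diff_Re_holomorphic)
  moreover have "\<forall>\<^sub>F w in at \<zeta> within U. - \<epsilon> < f w" if "\<zeta> \<in> frontier U" "\<epsilon> > 0" for \<zeta> \<epsilon>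
  proof -
    have "\<zeta> \<in> closure U" using that(1) by (simp add: frontier_def)
    then have "(h \<longlongrightarrow> h \<zeta>) (at \<zeta> within U)"
      using \<open>continuous_on (closure U) h\<close> closure_subset
      by (auto simp: continuous_on_def intro: tendsto_within_subset)
    then have "\<forall>\<^sub>F w in at \<zeta> within U. h w < h \<zeta> + \<epsilon> / 2"
      using \<open>\<epsilon> > 0\<close> by (intro order_tendstoD) auto
    moreover have "\<forall>\<^sub>F w in at \<zeta> within U. indicator E \<zeta> - \<epsilon> / 2 < v w"
      using v_boundary that by simp
    moreover have "\<forall>\<^sub>F w in at \<zeta> within U. w \<in> U" by (simp add: eventually_at_filter)
    ultimately show ?thesis
      by eventually_elim (use boundary[OF that(1)] in \<open>auto simp: f_def h[symmetric]\<close>)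
  qed
  ultimately have "0 \<le> f z"
    using assms(1,2,7) by (intro superharmonic_minimum_principle)
  then show "h z \<le> x" using h[OF \<open>z \<in> U\<close>] by (simp add: \<open>x = v z\<close> f_def)
qed

definition slit_annulus :: "real \<Rightarrow> real \<Rightarrow> complex set" where
  "slit_annulus r1 r2 = {w. r1 < cmod w \<and> cmod w < r2} - \<real>\<^sub>\<le>\<^sub>0"

lemma slit_annulus_eq:
  assumes "0 < r1"
  shows "{w. r1 < cmod w \<and> cmod w < r2} - {complex_of_real x | x. - r2 < x \<and> x < - r1} = slit_annulus r1 r2"
proof -
  have "w \<in> {complex_of_real x | x. - r2 < x \<and> x < - r1} \<longleftrightarrow> w \<in> \<real>\<^sub>\<le>\<^sub>0"
    if "r1 < cmod w" "cmod w < r2" for w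
    using that assms by (auto simp: complex_nonpos_Reals_iff complex_eq_iff cmod_def)
  then show ?thesis unfolding slit_annulus_def by blast
qed

lemma open_slit_annulus: "open (slit_annulus r1 r2)"
  unfolding slit_annulus_def
  by (intro open_Diff open_Collect_conj open_Collect_less continuous_intros closed_nonpos_Reals_complex)

lemma bounded_slit_annulus: "bounded (slit_annulus r1 r2)"
  by (rule bounded_subset[OF bounded_ball[of 0 r2]]) (auto simp: slit_annulus_def)

lemma closure_slit_annulus_subset: "closure (slit_annulus r1 r2) \<subseteq> {w. r1 \<le> cmod w \<and> cmod w \<le> r2}"
  by (intro closure_minimal closed_Collect_conj closed_Collect_le continuous_intros)
    (auto simp: slit_annulus_def)

lemma frontier_slit_annulus_subset:
  "frontier (slit_annulus r1 r2) \<subseteq> {w. cmod w = r1 \<or> cmod w = r2} \<union> \<real>\<^sub>\<le>\<^sub>0"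
  using closure_slit_annulus_subset[of r1 r2] open_slit_annulus[of r1 r2]
  by (auto simp: frontier_def interior_open slit_annulus_def)

definition sqrt_barrier :: "real \<Rightarrow> complex \<Rightarrow> real" where
  "sqrt_barrier a w = sqrt ((cmod w + Re w) / 2) * (1 - a / cmod w)"

lemma Re_csqrt_minus_divide_csqrt:
  assumes "w \<noteq> 0"
  shows "Re (csqrt w - of_real a / csqrt w) = sqrt_barrier a w"
proof -
  have "(Re (csqrt w))\<^sup>2 + (Im (csqrt w))\<^sup>2 = cmod w"
    by (metis cmod_power2 norm_csqrt real_sqrt_pow2 norm_ge_zero)
  then have "Re (of_real a / csqrt w) = a * Re (csqrt w) / cmod w"
    by (simp add: Re_divide)
  then show ?thesis by (simp add: sqrt_barrier_def algebra_simps)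
qed

lemma continuous_on_sqrt_barrier: "continuous_on (- {0}) (sqrt_barrier a)"
  unfolding sqrt_barrier_def by (intro continuous_intros) auto

lemma sqrt_barrier_le_sqrt_norm:
  assumes "0 \<le> a"
  shows "sqrt_barrier a w \<le> sqrt (cmod w)"
proof -
  have "sqrt ((cmod w + Re w) / 2) * (1 - a / cmod w) \<le> sqrt ((cmod w + Re w) / 2)"
    using assms abs_Re_le_cmod[of w] by (intro mult_left_le) (auto simp: abs_le_iff)
  also have "\<dots> \<le> sqrt (cmod w)"
    using complex_Re_le_cmod[of w] by simp
  finally show ?thesis unfolding sqrt_barrier_def .
qed

lemma sqrt_barrier_norm_self: "sqrt_barrier (cmod w) w = 0"
  by (cases "w = 0") (auto simp: sqrt_barrier_def)

lemma sqrt_barrier_nonpos_Reals: "w \<in> \<real>\<^sub>\<le>\<^sub>0 \<Longrightarrow> sqrt_barrier a w = 0"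
  by (auto simp: sqrt_barrier_def complex_nonpos_Reals_iff cmod_def)

lemma sqrt_barrier_right_half_plane:
  assumes "0 \<le> Re w" and "a \<le> cmod w"
  shows "sqrt (cmod w / 2) * (1 - a / cmod w) \<le> sqrt_barrier a w"
  unfolding sqrt_barrier_def using assms
  by (intro mult_right_mono) (auto simp: divide_le_eq_1)

lemma sqrt_barrier_le_indicator_frontier:
  assumes "0 \<le> r1" and "0 < r2" and "\<zeta> \<in> frontier (slit_annulus r1 r2)"
  shows "sqrt_barrier r1 \<zeta> / sqrt r2 \<le> indicator {w. cmod w = r2} \<zeta>"
  using frontier_slit_annulus_subset[of r1 r2] assms sqrt_barrier_le_sqrt_norm[OF assms(1), of \<zeta>]
  by (auto simp: sqrt_barrier_norm_self sqrt_barrier_nonpos_Reals)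

lemma harmonic_measure_slit_annulus_ge_sqrt_barrier:
  assumes "0 < r1" and "z \<in> slit_annulus r1 r2"
  shows "sqrt_barrier r1 z / sqrt r2 \<le> harmonic_measure z {w. cmod w = r2} (slit_annulus r1 r2)"
proof (rule harmonic_measure_ge_harmonic_minorant[OF open_slit_annulus bounded_slit_annulus])
  show "(\<lambda>w. (csqrt w - of_real r1 / csqrt w) / of_real (sqrt r2)) holomorphic_on slit_annulus r1 r2"
    by (intro holomorphic_intros) (auto simp: slit_annulus_def)
  show "sqrt_barrier r1 w / sqrt r2 = Re ((csqrt w - of_real r1 / csqrt w) / of_real (sqrt r2))"
    if "w \<in> slit_annulus r1 r2" for w
    using that assms(1)
    by (subst Re_divide_of_real, subst Re_csqrt_minus_divide_csqrt) (auto simp: slit_annulus_def)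
  show "continuous_on (closure (slit_annulus r1 r2)) (\<lambda>w. sqrt_barrier r1 w / sqrt r2)"
    using closure_slit_annulus_subset[of r1 r2] assms(1)
    by (intro continuous_intros continuous_on_subset[OF continuous_on_sqrt_barrier]) auto
  have "0 < r2" using assms by (auto simp: slit_annulus_def)
  then show "sqrt_barrier r1 \<zeta> / sqrt r2 \<le> indicator {w. cmod w = r2} \<zeta>"
    if "\<zeta> \<in> frontier (slit_annulus r1 r2)" for \<zeta>
    using sqrt_barrier_le_indicator_frontier[OF _ _ that] assms(1) by simp
qed (fact assms(2))

theorem lemma4p2:
  fixes R1 R :: real
  assumes "0 < R1" and "R1 < R"
  shows "\<exists>C>0. \<forall>R2 z. R < R2 \<longrightarrow> cmod z = R \<longrightarrow> 0 \<le> Re z \<longrightarrow>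
           harmonic_measure z {w. cmod w = R2}
             ({w. R1 < cmod w \<and> cmod w < R2} - {complex_of_real x | x. - R2 < x \<and> x < - R1})
           \<ge> C / sqrt R2"
proof (intro exI conjI allI impI)
  show "0 < sqrt (R / 2) * (1 - R1 / R)" using assms by simp
  fix R2 and z :: complex
  assume "R < R2" "cmod z = R" "0 \<le> Re z"
  then have "z \<in> slit_annulus R1 R2"
    using assms by (auto simp: slit_annulus_def complex_nonpos_Reals_iff cmod_def)
  have "sqrt (R / 2) * (1 - R1 / R) / sqrt R2 \<le> sqrt_barrier R1 z / sqrt R2"
    using sqrt_barrier_right_half_plane[of z R1] \<open>cmod z = R\<close> \<open>0 \<le> Re z\<close> \<open>R < R2\<close> assms
    by (intro divide_right_mono) auto
  also have "\<dots> \<le> harmonic_measure z {w. cmod w = R2} (slit_annulus R1 R2)"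
    using assms(1) \<open>z \<in> slit_annulus R1 R2\<close> by (rule harmonic_measure_slit_annulus_ge_sqrt_barrier)
  finally show "sqrt (R / 2) * (1 - R1 / R) / sqrt R2 \<le> harmonic_measure z {w. cmod w = R2}
      ({w. R1 < cmod w \<and> cmod w < R2} - {complex_of_real x | x. - R2 < x \<and> x < - R1})"
    using slit_annulus_eq[OF assms(1)] by simp
qed

end
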